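(* For every $r\in\mathbb N$ and every finite graph $G$, \[\mathrm{adm}_r(G)+1\le \mathrm{copw}_r(G)\le \mathrm{wcol}_{2r}(G)+1.\]
   Context: Graphs are finite, simple, undirected. For $r\in\mathbb N$ and $k\ge 1$, the Cops and Robber game of radius $r$ and width $k$ on $G$: let $S_0=\emptyset$ and let the robber choose $v_0\in V(G)$; in round $i\ge1$ the cops announce $S_i\subseteq V(G)$ with $|S_i|\le k$, and then the robber moves from $v_{i-1}$ to $v_i$ along a path of length at most $r$ (length $0$ allowed) containing no vertex of $S_{i-1}\cap S_i$. The cops win if $v_i\in S_i$ for some $i$. $\mathrm{copw}_r(G)$ is the least $k$ for which the cops have a winning strategy. The $r$-weak coloring number $\mathrm{wcol}_r(G)$ is the least $k$ such that there is a total order $<$ on $V(G)$ in which, for every vertex $v$, at most $k$ vertices $w<v$ are weakly $r$-reachable from $v$, i.e. there is a path of length at most $r$ from $v$ to $w$ on which $w$ is the $<$-smallest vertex. The $r$-admissibility $\mathrm{adm}_r(G)$ is the least $k$ such that there is a total order $<$ on $V(G)$ such that for every $v$ there are no more than $k$ paths of length at most $r$ starting at $v$, ending at some vertex $w<v$, and pairwise sharing only the vertex $v$. *)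

theory Defs
  imports Main
begin

definition simple_graph :: "'a set \<Rightarrow> ('a \<Rightarrow> 'a \<Rightarrow> bool) \<Rightarrow> bool" where
  "simple_graph V E \<longleftrightarrow> finite V \<and>
     (\<forall>x y. E x y \<longrightarrow> x \<in> V \<and> y \<in> V \<and> x \<noteq> y) \<and>
     (\<forall>x y. E x y \<longrightarrow> E y x)"

definition gpath :: "'a set \<Rightarrow> ('a \<Rightarrow> 'a \<Rightarrow> bool) \<Rightarrow> 'a list \<Rightarrow> bool" where
  "gpath V E p \<longleftrightarrow> p \<noteq> [] \<and> distinct p \<and> set p \<subseteq> V \<and> successively E p"

definition plen :: "'a list \<Rightarrow> nat" where
  "plen p = length p - 1"

text \<open>Robber move from a to b with at most r edges, avoiding the set X (= S_{i-1} \<inter> S_i).\<close>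
definition robber_move ::
  "'a set \<Rightarrow> ('a \<Rightarrow> 'a \<Rightarrow> bool) \<Rightarrow> nat \<Rightarrow> 'a set \<Rightarrow> 'a \<Rightarrow> 'a \<Rightarrow> bool" where
  "robber_move V E r X a b \<longleftrightarrow>
     (\<exists>p. gpath V E p \<and> hd p = a \<and> last p = b \<and> plen p \<le> r \<and> set p \<inter> X = {})"

text \<open>Cop positions in round i induced by a cop strategy sigma (a function of the robber's
  history v_0,...,v_{i-1}); S_0 is empty.\<close>
definition cop_pos :: "('a list \<Rightarrow> 'a set) \<Rightarrow> (nat \<Rightarrow> 'a) \<Rightarrow> nat \<Rightarrow> 'a set" where
  "cop_pos \<sigma> v i = (if i = 0 then {} else \<sigma> (map v [0..<i]))"

definition cops_win :: "'a set \<Rightarrow> ('a \<Rightarrow> 'a \<Rightarrow> bool) \<Rightarrow> nat \<Rightarrow> nat \<Rightarrow> bool" where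
  "cops_win V E r k \<longleftrightarrow>
     (\<exists>\<sigma> :: 'a list \<Rightarrow> 'a set.
        (\<forall>h. \<sigma> h \<subseteq> V \<and> card (\<sigma> h) \<le> k) \<and>
        (\<forall>v :: nat \<Rightarrow> 'a.
           v 0 \<in> V \<and>
           (\<forall>i. robber_move V E r (cop_pos \<sigma> v i \<inter> cop_pos \<sigma> v (Suc i)) (v i) (v (Suc i)))
           \<longrightarrow> (\<exists>i. v i \<in> cop_pos \<sigma> v i)))"

definition copw :: "'a set \<Rightarrow> ('a \<Rightarrow> 'a \<Rightarrow> bool) \<Rightarrow> nat \<Rightarrow> nat" where
  "copw V E r = (LEAST k. k \<ge> 1 \<and> cops_win V E r k)"

text \<open>Strict part of a linear order R on V (R as in Order_Relation: reflexive on V).\<close>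
definition less_in :: "('a \<times> 'a) set \<Rightarrow> 'a \<Rightarrow> 'a \<Rightarrow> bool" where
  "less_in R w v \<longleftrightarrow> (w, v) \<in> R \<and> w \<noteq> v"

definition wreach :: "'a set \<Rightarrow> ('a \<Rightarrow> 'a \<Rightarrow> bool) \<Rightarrow> ('a \<times> 'a) set \<Rightarrow> nat \<Rightarrow> 'a \<Rightarrow> 'a \<Rightarrow> bool" where
  "wreach V E R r v w \<longleftrightarrow>
     (\<exists>p. gpath V E p \<and> hd p = v \<and> last p = w \<and> plen p \<le> r \<and>
          (\<forall>u\<in>set p. u \<noteq> w \<longrightarrow> less_in R w u))"

definition wcol :: "'a set \<Rightarrow> ('a \<Rightarrow> 'a \<Rightarrow> bool) \<Rightarrow> nat \<Rightarrow> nat" where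
  "wcol V E r = (LEAST k. \<exists>R. linear_order_on V R \<and>
      (\<forall>v\<in>V. card {w. less_in R w v \<and> wreach V E R r v w} \<le> k))"

definition adm :: "'a set \<Rightarrow> ('a \<Rightarrow> 'a \<Rightarrow> bool) \<Rightarrow> nat \<Rightarrow> nat" where
  "adm V E r = (LEAST k. \<exists>R. linear_order_on V R \<and>
      (\<forall>v\<in>V. \<forall>P. (\<forall>p\<in>P. gpath V E p \<and> hd p = v \<and> plen p \<le> r \<and> less_in R (last p) v) \<and>
                  (\<forall>p\<in>P. \<forall>q\<in>P. p \<noteq> q \<longrightarrow> set p \<inter> set q = {v})
                  \<longrightarrow> card P \<le> k))"

end

theory Submission
  imports Defs
begin

text \<open>
  Upper bound: fix an order witnessing \<open>wcol\<^sub>2\<^sub>r\<close> and let the cops occupy, in every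
  round, all vertices weakly \<open>2r\<close>-reachable from the robber's current position; these are
  at most \<open>wcol\<^sub>2\<^sub>r + 1\<close> vertices. The least vertex \<open>m\<^sub>i\<close> of the robber's \<open>i\<close>-th path is
  weakly \<open>r\<close>-reachable from both of its ends, so it is occupied during the next move, which
  must avoid it. If the least vertex of the next path were below \<open>m\<^sub>i\<close>, it would be weakly
  \<open>2r\<close>-reachable through the concatenation of both paths and hence occupied as well. So the
  \<open>m\<^sub>i\<close> increase strictly, which is impossible in a finite order: the robber has no infinite
  legal play at all.

  Lower bound: if \<open>k + 1\<close> cops win, every nonempty \<open>W\<close> contains a vertex \<open>v\<close> with no
  \<open>k + 1\<close> paths of length at most \<open>r\<close> into \<open>W - {v}\<close> pairwise meeting only in \<open>v\<close>.
  Otherwise the robber survives inside \<open>W\<close> forever: whenever \<open>v\<close> is about to be occupied,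
  one path of the fan avoids the at most \<open>k\<close> other cop positions. Repeatedly putting such a
  vertex on top of an order of the remaining ones yields an order witnessing \<open>adm\<^sub>r \<le> k\<close>.
\<close>

section \<open>Walks and weak reachability\<close>

definition walk :: "'a set \<Rightarrow> ('a \<Rightarrow> 'a \<Rightarrow> bool) \<Rightarrow> 'a list \<Rightarrow> bool" where
  "walk V E p \<longleftrightarrow> p \<noteq> [] \<and> set p \<subseteq> V \<and> successively E p"

lemma gpath_imp_walk: "gpath V E p \<Longrightarrow> walk V E p"
  by (simp add: gpath_def walk_def)

lemma walk_obtain_gpath:
  assumes "walk V E p"
  obtains q where "gpath V E q" "hd q = hd p" "last q = last p" "set q \<subseteq> set p" "length q \<le> length p"
  using assms
proof (induction "length p" arbitrary: p rule: less_induct)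
  case less
  show ?case
  proof (cases "distinct p")
    case True
    then show ?thesis using less.prems by (auto simp: gpath_def walk_def)
  next
    case False
    then obtain xs ys zs y where p: "p = xs @ [y] @ ys @ [y] @ zs"
      using not_distinct_decomp by blast
    define q where "q = xs @ [y] @ zs"
    have "successively E ((xs @ [y]) @ (ys @ [y] @ zs))"
      and "successively E ((xs @ [y] @ ys) @ ([y] @ zs))"
      using less.prems(2) unfolding p walk_def by simp_all
    then have "successively E (xs @ [y])" "successively E ([y] @ zs)"
      by (simp_all only: successively_append_iff[of E "xs @ [y]"]
          successively_append_iff[of E "xs @ [y] @ ys"])
    then have "successively E ((xs @ [y]) @ zs)"
      by (cases zs) (auto simp: successively_append_iff)
    then have "walk V E q"
      using less.prems(2) unfolding p q_def walk_def by auto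
    moreover have "length q < length p" "hd q = hd p" "last q = last p" "set q \<subseteq> set p"
      unfolding p q_def by (auto simp: hd_append)
    ultimately show ?thesis
      using less.hyps less.prems(1) by (metis order.trans less_imp_le_nat)
  qed
qed

lemma walk_prefix:
  assumes "walk V E (xs @ m # ys)"
  shows "walk V E (xs @ [m])"
proof -
  have "successively E ((xs @ [m]) @ ys)"
    using assms by (simp add: walk_def)
  then have "successively E (xs @ [m])"
    using successively_append_iff[of E "xs @ [m]" ys] by blast
  then show ?thesis
    using assms by (simp add: walk_def)
qed

lemma walk_rev:
  assumes "walk V E p" "symp E"
  shows "walk V E (rev p)"
proof -
  have "successively (\<lambda>x y. E y x) p"
    using assms by (auto simp: walk_def intro: successively_mono dest: sympD)
  then show ?thesis
    using assms(1) by (simp add: walk_def)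
qed

lemma walk_append_tl:
  assumes "walk V E p" "walk V E q" "last p = hd q"
  shows "walk V E (p @ tl q)"
proof (cases q)
  case Nil
  then show ?thesis using assms(2) by (simp add: walk_def)
next
  case (Cons x bs)
  then show ?thesis
    using assms by (cases bs) (auto simp: walk_def successively_append_iff)
qed

lemma set_append_tl:
  assumes "p \<noteq> []" "last p = hd q"
  shows "set (p @ tl q) = set p \<union> set q"
  using assms by (cases q) auto

lemma wreach_imp_mem: "wreach V E R d v w \<Longrightarrow> v \<in> V \<and> w \<in> V"
  unfolding wreach_def gpath_def by (metis hd_in_set last_in_set subsetD)

lemma wreach_if_walk_through:
  assumes "walk V E p" "hd p = v" "m \<in> set p" "length p \<le> Suc d" "\<forall>u\<in>set p. (m, u) \<in> R"
  shows "wreach V E R d v m"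
proof -
  obtain xs ys where p: "p = xs @ m # ys"
    using split_list[OF assms(3)] by blast
  have "walk V E (xs @ [m])"
    using assms(1) walk_prefix unfolding p by fast
  then obtain q where q: "gpath V E q" "hd q = hd (xs @ [m])" "last q = m"
    "set q \<subseteq> set (xs @ [m])" "length q \<le> length (xs @ [m])"
    by (rule walk_obtain_gpath) simp
  have "hd q = v"
    using q(2) assms(2) unfolding p by (cases xs) auto
  moreover have "plen q \<le> d"
    using q(5) assms(4) unfolding p plen_def by simp
  moreover have "\<forall>u\<in>set q. u \<noteq> m \<longrightarrow> less_in R m u"
    using q(4) assms(5) unfolding p less_in_def by auto
  ultimately show ?thesis
    unfolding wreach_def using q by blast
qed

lemma wreach_least_of_walk:
  assumes "walk V E p" "symp E" "length p \<le> Suc d" "m \<in> set p" "\<forall>u\<in>set p. (m, u) \<in> R"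
  shows "wreach V E R d (hd p) m" "wreach V E R d (last p) m"
proof -
  show "wreach V E R d (hd p) m"
    by (rule wreach_if_walk_through[OF assms(1) refl assms(4,3,5)])
  have "p \<noteq> []"
    using assms(1) by (simp add: walk_def)
  show "wreach V E R d (last p) m"
    by (rule wreach_if_walk_through[OF walk_rev[OF assms(1,2)]])
      (use \<open>p \<noteq> []\<close> assms(3-5) in \<open>simp_all add: hd_rev\<close>)
qed

lemma wreach_through_walk_append:
  assumes "walk V E p" "walk V E q" "last p = hd q" "length p \<le> Suc a" "length q \<le> Suc b"
    "m \<in> set q" "\<forall>u\<in>set p \<union> set q. (m, u) \<in> R"
  shows "wreach V E R (a + b) (hd p) m"
proof -
  have "p \<noteq> []" "q \<noteq> []"
    using assms(1,2) by (simp_all add: walk_def)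
  then have "set (p @ tl q) = set p \<union> set q" "hd (p @ tl q) = hd p"
    "length (p @ tl q) \<le> Suc (a + b)"
    using set_append_tl[of p q] assms(3-5) by auto
  then show ?thesis
    using wreach_if_walk_through[OF walk_append_tl[OF assms(1-3)]] assms(6,7) by simp
qed

section \<open>Linear orders\<close>

lemma linear_order_on_least:
  assumes "linear_order_on V R" "finite A" "A \<noteq> {}" "A \<subseteq> V"
  shows "\<exists>m\<in>A. \<forall>u\<in>A. (m, u) \<in> R"
  using assms(2-4)
proof (induction A rule: finite_ne_induct)
  case (singleton x)
  then show ?case
    using assms(1) by (auto simp: order_on_defs refl_on_def)
next
  case (insert x F)
  then obtain m where m: "m \<in> F" "\<forall>u\<in>F. (m, u) \<in> R" by auto
  have "trans R" "total_on V R" "refl_on V R"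
    using assms(1) by (auto simp: order_on_defs)
  show ?case
  proof (cases "(x, m) \<in> R")
    case True
    then show ?thesis
      using m insert.prems \<open>trans R\<close> \<open>refl_on V R\<close> by (auto simp: refl_on_def dest: transD)
  next
    case False
    then have "(m, x) \<in> R"
      using m(1) insert.hyps insert.prems \<open>total_on V R\<close> by (auto simp: total_on_def)
    then show ?thesis
      using m by blast
  qed
qed

lemma linear_order_on_no_ascending_chain:
  assumes "linear_order_on V R" "finite V"
  shows "\<not> (\<forall>i. less_in R (f i) (f (Suc i)))"
proof -
  have "R \<subseteq> V \<times> V"
    using assms(1) by (auto simp: order_on_defs refl_on_def)
  then have "finite (R - Id)"
    using assms(2) by (meson finite_Diff finite_SigmaI finite_subset)
  then have "wf ((R - Id)\<inverse>)"
    using finite_acyclic_wf_converse linear_order_on_acyclic[OF assms(1)] by blast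
  then show ?thesis
    unfolding wf_iff_no_infinite_down_chain less_in_def by auto
qed

lemma linear_order_on_insert_top:
  assumes lin: "linear_order_on A R" and v: "v \<notin> A"
  shows "linear_order_on (insert v A) (R \<union> insert v A \<times> {v})" (is "linear_order_on _ ?R")
proof -
  have "refl_on A R" "trans R" "antisym R" and RA: "R \<subseteq> A \<times> A"
    using lin partial_order_onD[of A R] by (simp_all add: linear_order_on_def)
  have "total_on A R"
    using lin by (simp add: linear_order_on_def)
  have "refl_on (insert v A) ?R"
    using RA \<open>refl_on A R\<close> by (auto simp: refl_on_def)
  moreover have "trans ?R"
  proof (rule transI)
    fix x y z
    assume xy: "(x, y) \<in> ?R" and yz: "(y, z) \<in> ?R"
    show "(x, z) \<in> ?R"
    proof (cases "z = v")
      case True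
      then show ?thesis
        using xy RA by auto
    next
      case False
      then have "(y, z) \<in> R"
        using yz by simp
      then have "(x, y) \<in> R"
        using xy RA v by auto
      then show ?thesis
        using \<open>(y, z) \<in> R\<close> \<open>trans R\<close> by (simp add: transD)
    qed
  qed
  moreover have "antisym ?R"
  proof (rule antisymI)
    fix x y
    assume "(x, y) \<in> ?R" "(y, x) \<in> ?R"
    then show "x = y"
      using RA v \<open>antisym R\<close> by (cases "x = v"; cases "y = v") (auto dest: antisymD)
  qed
  moreover have "total_on (insert v A) ?R"
    using \<open>total_on A R\<close> by (auto simp: total_on_def)
  moreover have "?R \<subseteq> insert v A \<times> insert v A"
    using RA by auto
  ultimately show ?thesis
    by (simp add: order_on_defs)
qed

lemma less_in_insert_top:
  assumes "R \<subseteq> A \<times> A" "v \<notin> A"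
  shows "less_in (R \<union> insert v A \<times> {v}) w u \<longleftrightarrow> less_in R w u \<or> (u = v \<and> w \<in> A)"
  using assms by (auto simp: less_in_def)

section \<open>Upper bound by the weak colouring number\<close>

lemma card_wreach_le:
  assumes "finite V" "\<forall>v\<in>V. card {w. less_in R w v \<and> wreach V E R d v w} \<le> k"
  shows "card {w. wreach V E R d v w} \<le> Suc k"
proof (cases "v \<in> V")
  case True
  let ?below = "{w. less_in R w v \<and> wreach V E R d v w}"
  have "w = v \<or> less_in R w v" if reach: "wreach V E R d v w" for w
  proof -
    obtain p where "gpath V E p" "hd p = v" "last p = w" "\<forall>u\<in>set p. u \<noteq> w \<longrightarrow> less_in R w u"
      using reach unfolding wreach_def by blast
    then show ?thesis
      by (metis gpath_def hd_in_set)
  qed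
  then have "{w. wreach V E R d v w} \<subseteq> insert v ?below"
    by blast
  moreover have "finite ?below"
    using assms(1) by (rule rev_finite_subset) (auto dest: wreach_imp_mem)
  ultimately have "card {w. wreach V E R d v w} \<le> card (insert v ?below)"
    by (intro card_mono) auto
  also have "\<dots> \<le> Suc (card ?below)"
    by (simp add: card_insert_le_m1 \<open>finite ?below\<close>)
  also have "\<dots> \<le> Suc k"
    using assms(2) True by simp
  finally show ?thesis .
next
  case False
  then have "{w. wreach V E R d v w} = {}"
    using wreach_imp_mem by fast
  then show ?thesis
    by simp
qed

lemma no_infinite_play_against_wreach_cops:
  assumes G: "simple_graph V E" and lin: "linear_order_on V R"
    and \<sigma>: "\<sigma> = (\<lambda>h. {w. wreach V E R (2 * r) (last h) w})"
  shows "\<not> (\<forall>i. robber_move V E r (cop_pos \<sigma> v i \<inter> cop_pos \<sigma> v (Suc i)) (v i) (v (Suc i)))"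
proof
  assume moves: "\<forall>i. robber_move V E r (cop_pos \<sigma> v i \<inter> cop_pos \<sigma> v (Suc i)) (v i) (v (Suc i))"
  have "finite V" "symp E"
    using G by (auto simp: simple_graph_def symp_def)
  have "trans R"
    using lin by (simp add: order_on_defs)
  define C where "C i = {w. wreach V E R (2 * r) (v i) w}" for i
  have cops: "cop_pos \<sigma> v (Suc i) = C i" for i
    by (simp add: cop_pos_def \<sigma> C_def)
  obtain p where p: "\<And>i. gpath V E (p i) \<and> hd (p i) = v i \<and> last (p i) = v (Suc i) \<and>
      plen (p i) \<le> r \<and> set (p i) \<inter> (cop_pos \<sigma> v i \<inter> C i) = {}"
    using moves unfolding robber_move_def cops by metis
  have walk: "walk V E (p i)" and len: "length (p i) \<le> Suc r" for i
    using p[of i] by (auto simp: gpath_imp_walk plen_def gpath_def)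
  have avoid: "set (p (Suc i)) \<inter> (C i \<inter> C (Suc i)) = {}" for i
    using p[of "Suc i"] by (simp add: cops)
  have "\<forall>i. \<exists>m\<in>set (p i). \<forall>u\<in>set (p i). (m, u) \<in> R"
    using linear_order_on_least[OF lin] walk by (simp add: walk_def)
  then obtain m where m: "\<And>i. m i \<in> set (p i)" "\<And>i u. u \<in> set (p i) \<Longrightarrow> (m i, u) \<in> R"
    by metis
  have m_cops: "m i \<in> C i \<inter> C (Suc i)" for i
    using wreach_least_of_walk[OF walk \<open>symp E\<close> _ m(1), of i "2 * r" R] len[of i] m(2) p[of i]
    by (simp add: C_def)
  have "less_in R (m i) (m (Suc i))" for i
  proof -
    have fresh: "m (Suc i) \<notin> C i \<inter> C (Suc i)"
      using avoid[of i] m(1)[of "Suc i"] by blast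
    have "(m (Suc i), m i) \<notin> R"
    proof
      assume "(m (Suc i), m i) \<in> R"
      with \<open>trans R\<close> have below: "\<forall>u\<in>set (p i) \<union> set (p (Suc i)). (m (Suc i), u) \<in> R"
        using m(2)[of _ i] m(2)[of _ "Suc i"] by (blast dest: transD)
      have "wreach V E R (r + r) (hd (p i)) (m (Suc i))"
        by (rule wreach_through_walk_append[OF walk walk _ len len m(1) below])
          (use p[of i] p[of "Suc i"] in simp)
      then show False
        using fresh m_cops[of "Suc i"] p[of i] by (simp add: C_def mult_2)
    qed
    moreover have "m (Suc i) \<noteq> m i"
      using fresh m_cops[of i] by auto
    moreover have "m i \<in> V" "m (Suc i) \<in> V"
      using m(1)[of i] m(1)[of "Suc i"] walk[of i] walk[of "Suc i"] by (auto simp: walk_def)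
    ultimately show ?thesis
      using lin by (auto simp: less_in_def order_on_defs total_on_def)
  qed
  then show False
    using linear_order_on_no_ascending_chain[OF lin \<open>finite V\<close>] by blast
qed

lemma cops_win_if_wcol_order:
  assumes G: "simple_graph V E" and lin: "linear_order_on V R"
    and bound: "\<forall>v\<in>V. card {w. less_in R w v \<and> wreach V E R (2 * r) v w} \<le> k"
  shows "cops_win V E r (Suc k)"
proof -
  define \<sigma> where "\<sigma> = (\<lambda>h. {w. wreach V E R (2 * r) (last h) w})"
  have "\<sigma> h \<subseteq> V \<and> card (\<sigma> h) \<le> Suc k" for h
    using wreach_imp_mem card_wreach_le G bound by (fastforce simp: \<sigma>_def simple_graph_def)
  moreover have "\<not> (\<forall>i. robber_move V E r (cop_pos \<sigma> v i \<inter> cop_pos \<sigma> v (Suc i)) (v i) (v (Suc i)))"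
    for v
    by (rule no_infinite_play_against_wreach_cops[OF G lin \<sigma>_def])
  ultimately show ?thesis
    unfolding cops_win_def by (intro exI[of _ \<sigma>]) (simp, blast)
qed

section \<open>Lower bound by admissibility\<close>

definition fan ::
  "'a set \<Rightarrow> ('a \<Rightarrow> 'a \<Rightarrow> bool) \<Rightarrow> nat \<Rightarrow> 'a \<Rightarrow> 'a set \<Rightarrow> 'a list set \<Rightarrow> bool" where
  "fan V E r v T P \<longleftrightarrow> (\<forall>p\<in>P. gpath V E p \<and> hd p = v \<and> plen p \<le> r \<and> last p \<in> T) \<and>
     (\<forall>p\<in>P. \<forall>q\<in>P. p \<noteq> q \<longrightarrow> set p \<inter> set q = {v})"

lemma fan_path_avoiding:
  assumes "fan V E r v T P" "finite X" "card X < card P"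
  shows "\<exists>p\<in>P. set p \<inter> X \<subseteq> {v}"
proof (rule ccontr)
  assume "\<not> ?thesis"
  then have "\<forall>p\<in>P. \<exists>x. x \<in> set p \<inter> X - {v}"
    by blast
  then obtain f where f: "\<forall>p\<in>P. f p \<in> set p \<inter> X - {v}"
    by (rule bchoice[THEN exE])
  have "inj_on f P"
  proof (rule inj_onI)
    fix p q
    assume pq: "p \<in> P" "q \<in> P" "f p = f q"
    show "p = q"
    proof (rule ccontr)
      assume "p \<noteq> q"
      then have "set p \<inter> set q = {v}"
        using assms(1) pq(1,2) unfolding fan_def by simp
      moreover have "f p \<in> set p - {v}" "f p \<in> set q"
        using f pq by auto
      ultimately show False
        by blast
    qed
  qed
  moreover have "f ` P \<subseteq> X"
    using f by blast
  ultimately have "card P \<le> card X"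
    using assms(2) by (rule card_inj_on_le)
  then show False
    using assms(3) by simp
qed

lemma robber_move_along_fan:
  assumes "fan V E r v (U - {v}) P" "v \<in> U" "v \<in> V" "v \<notin> A" "finite B" "card B \<le> card P"
  shows "\<exists>w\<in>U. w \<notin> B \<and> robber_move V E r (A \<inter> B) v w"
proof (cases "v \<in> B")
  case False
  have "robber_move V E r (A \<inter> B) v v"
    unfolding robber_move_def
    by (rule exI[of _ "[v]"]) (use assms(3,4) in \<open>simp add: gpath_def plen_def\<close>)
  then show ?thesis
    using False assms(2) by blast
next
  case True
  moreover have "0 < card B"
    using True assms(5) by (auto simp: card_gt_0_iff)
  ultimately have "card (B - {v}) < card P"
    using assms(5,6) by simp
  then obtain p where p: "p \<in> P" "set p \<inter> (B - {v}) \<subseteq> {v}"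
    using fan_path_avoiding[OF assms(1)] assms(5) by blast
  have path: "gpath V E p" "hd p = v" "plen p \<le> r" "last p \<in> U - {v}"
    using p(1) assms(1) unfolding fan_def by auto
  moreover have "last p \<in> set p"
    using path(1) by (simp add: gpath_def)
  ultimately have "last p \<notin> B"
    using p(2) by blast
  moreover have "set p \<inter> (A \<inter> B) = {}"
    using p(2) assms(4) by blast
  ultimately show ?thesis
    unfolding robber_move_def using path by blast
qed

lemma exists_seq_course_of_values:
  "\<exists>v. v 0 = x \<and> (\<forall>n. v (Suc n) = f (map v [0..<Suc n]))"
proof -
  define h where "h = rec_nat [x] (\<lambda>_ hs. hs @ [f hs])"
  have h_Suc: "h (Suc n) = h n @ [f (h n)]" for n
    by (simp add: h_def)
  have "h n = map (\<lambda>j. last (h j)) [0..<Suc n]" for n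
    by (induction n) (simp_all add: h_def[symmetric] h_Suc, simp add: h_def)
  then show ?thesis
    by (intro exI[of _ "\<lambda>j. last (h j)"]) (simp add: h_def[symmetric] h_Suc, simp add: h_def)
qed

lemma not_cops_win_if_fans:
  assumes "finite V" "U \<subseteq> V" "u0 \<in> U"
    and fans: "\<forall>u\<in>U. \<exists>P. fan V E r u (U - {u}) P \<and> k \<le> card P"
  shows "\<not> cops_win V E r k"
proof
  assume "cops_win V E r k"
  then obtain \<sigma> where \<sigma>: "\<forall>h. \<sigma> h \<subseteq> V \<and> card (\<sigma> h) \<le> k"
    and win: "\<forall>v. v 0 \<in> V \<and>
      (\<forall>i. robber_move V E r (cop_pos \<sigma> v i \<inter> cop_pos \<sigma> v (Suc i)) (v i) (v (Suc i)))
      \<longrightarrow> (\<exists>i. v i \<in> cop_pos \<sigma> v i)"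
    unfolding cops_win_def by blast
  \<comment> \<open>For the history h = [v_0, ..., v_i], prev h and \<sigma> h are the cop sets S_i and S_(i+1).\<close>
  define prev where "prev h = (if length h \<le> 1 then {} else \<sigma> (butlast h))" for h :: "'a list"
  define next_pos where "next_pos h =
    (SOME w. w \<in> U \<and> w \<notin> \<sigma> h \<and> robber_move V E r (prev h \<inter> \<sigma> h) (last h) w)" for h
  obtain v where v0: "v 0 = u0" and v_Suc: "\<And>n. v (Suc n) = next_pos (map v [0..<Suc n])"
    using exists_seq_course_of_values[of u0 next_pos] by blast
  have cops_now: "cop_pos \<sigma> v n = prev (map v [0..<Suc n])" for n
    by (cases n) (simp_all add: cop_pos_def prev_def butlast_append)
  have cops_next: "cop_pos \<sigma> v (Suc n) = \<sigma> (map v [0..<Suc n])" for n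
    by (simp add: cop_pos_def)
  have step: "v (Suc n) \<in> U \<and> v (Suc n) \<notin> cop_pos \<sigma> v (Suc n) \<and>
      robber_move V E r (cop_pos \<sigma> v n \<inter> cop_pos \<sigma> v (Suc n)) (v n) (v (Suc n))"
    if safe_n: "v n \<in> U" "v n \<notin> cop_pos \<sigma> v n" for n
  proof -
    let ?h = "map v [0..<Suc n]"
    obtain P where P: "fan V E r (v n) (U - {v n}) P" "k \<le> card P"
      using fans safe_n(1) by blast
    have "\<sigma> ?h \<subseteq> V" "card (\<sigma> ?h) \<le> k"
      using \<sigma> by simp_all
    then have fin: "finite (\<sigma> ?h)" and card: "card (\<sigma> ?h) \<le> card P"
      using assms(1) P(2) finite_subset by auto
    have "\<exists>w\<in>U. w \<notin> \<sigma> ?h \<and> robber_move V E r (prev ?h \<inter> \<sigma> ?h) (v n) w"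
      by (rule robber_move_along_fan[OF P(1) safe_n(1) _ _ fin card])
        (use safe_n assms(2) cops_now[of n] in auto)
    then have "\<exists>w. w \<in> U \<and> w \<notin> \<sigma> ?h \<and> robber_move V E r (prev ?h \<inter> \<sigma> ?h) (last ?h) w"
      by auto
    then have "next_pos ?h \<in> U \<and> next_pos ?h \<notin> \<sigma> ?h \<and>
        robber_move V E r (prev ?h \<inter> \<sigma> ?h) (last ?h) (next_pos ?h)"
      unfolding next_pos_def by (rule someI_ex)
    then show ?thesis
      unfolding v_Suc[of n] cops_now[of n] cops_next[of n] by simp
  qed
  have safe: "v n \<in> U \<and> v n \<notin> cop_pos \<sigma> v n" for n
    by (induction n) (use v0 assms(3) step in \<open>auto simp: cop_pos_def\<close>)
  have "v 0 \<in> V"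
    using safe[of 0] assms(2) by blast
  moreover have "\<forall>i. robber_move V E r (cop_pos \<sigma> v i \<inter> cop_pos \<sigma> v (Suc i)) (v i) (v (Suc i))"
    using step safe by simp
  ultimately obtain i where "v i \<in> cop_pos \<sigma> v i"
    using win by blast
  then show False
    using safe[of i] by simp
qed

definition admissible_order ::
  "'a set \<Rightarrow> ('a \<Rightarrow> 'a \<Rightarrow> bool) \<Rightarrow> nat \<Rightarrow> nat \<Rightarrow> 'a set \<Rightarrow> ('a \<times> 'a) set \<Rightarrow> bool" where
  "admissible_order V E r k U R \<longleftrightarrow> linear_order_on U R \<and>
     (\<forall>u\<in>U. \<forall>P. fan V E r u {w. less_in R w u} P \<longrightarrow> card P \<le> k)"

lemma adm_le:
  assumes "admissible_order V E r k V R"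
  shows "adm V E r \<le> k"
  unfolding adm_def
  by (rule Least_le) (use assms in \<open>auto simp: admissible_order_def fan_def\<close>)

lemma admissible_order_insert_top:
  assumes "admissible_order V E r k A R" "v \<notin> A" "\<forall>P. fan V E r v A P \<longrightarrow> card P \<le> k"
  shows "admissible_order V E r k (insert v A) (R \<union> insert v A \<times> {v})"
proof -
  have R: "linear_order_on A R"
    using assms(1) by (simp add: admissible_order_def)
  then have RA: "R \<subseteq> A \<times> A"
    by (auto simp: linear_order_on_def dest: partial_order_onD(4))
  have "{w. less_in (R \<union> insert v A \<times> {v}) w v} = A"
    using RA assms(2) by (auto simp: less_in_insert_top less_in_def)
  moreover have "{w. less_in (R \<union> insert v A \<times> {v}) w u} = {w. less_in R w u}" if "u \<in> A" for u
    using that assms(2) less_in_insert_top[OF RA assms(2), of _ u] by auto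
  ultimately show ?thesis
    using assms linear_order_on_insert_top[OF R assms(2)] by (auto simp: admissible_order_def)
qed

lemma admissible_order_if_small_fans:
  assumes "finite U"
    and "\<forall>W\<subseteq>U. W \<noteq> {} \<longrightarrow> (\<exists>v\<in>W. \<forall>P. fan V E r v (W - {v}) P \<longrightarrow> card P \<le> k)"
  shows "\<exists>R. admissible_order V E r k U R"
  using assms
proof (induction U rule: finite_psubset_induct)
  case (psubset U)
  show ?case
  proof (cases "U = {}")
    case True
    then show ?thesis
      by (auto simp: admissible_order_def intro: exI[of _ "{}"])
  next
    case False
    then obtain v where v: "v \<in> U" and v_small: "\<forall>P. fan V E r v (U - {v}) P \<longrightarrow> card P \<le> k"
      using psubset.prems by blast
    have "U - {v} \<subset> U"
      using v by blast
    moreover have "\<forall>W\<subseteq>U - {v}. W \<noteq> {} \<longrightarrow> (\<exists>x\<in>W. \<forall>P. fan V E r x (W - {x}) P \<longrightarrow> card P \<le> k)"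
      using psubset.prems by (meson Diff_subset subset_trans)
    ultimately have "\<exists>R. admissible_order V E r k (U - {v}) R"
      by (rule psubset.IH)
    then obtain R where "admissible_order V E r k (U - {v}) R" ..
    then have "admissible_order V E r k (insert v (U - {v})) (R \<union> insert v (U - {v}) \<times> {v})"
      by (rule admissible_order_insert_top) (use v_small in auto)
    then show ?thesis
      using v by (auto simp: insert_absorb)
  qed
qed

lemma adm_le_if_cops_win:
  assumes "finite V" "cops_win V E r (Suc k)"
  shows "adm V E r \<le> k"
proof -
  have "\<forall>W\<subseteq>V. W \<noteq> {} \<longrightarrow> (\<exists>v\<in>W. \<forall>P. fan V E r v (W - {v}) P \<longrightarrow> card P \<le> k)"
  proof (intro allI impI)
    fix W
    assume W: "W \<subseteq> V" "W \<noteq> {}"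
    show "\<exists>v\<in>W. \<forall>P. fan V E r v (W - {v}) P \<longrightarrow> card P \<le> k"
    proof (rule ccontr)
      assume "\<not> ?thesis"
      then have fans: "\<forall>w\<in>W. \<exists>P. fan V E r w (W - {w}) P \<and> Suc k \<le> card P"
        by (auto simp: not_le Suc_le_eq)
      obtain w0 where "w0 \<in> W"
        using W(2) by blast
      with assms(2) show False
        using not_cops_win_if_fans[OF assms(1) W(1) _ fans] by blast
    qed
  qed
  then have "\<exists>R. admissible_order V E r k V R"
    by (rule admissible_order_if_small_fans[OF assms(1)])
  then obtain R where "admissible_order V E r k V R" ..
  then show ?thesis
    by (rule adm_le)
qed

lemma wcol_order_exists:
  assumes "finite V"
  shows "\<exists>R. linear_order_on V R \<and>
    (\<forall>v\<in>V. card {w. less_in R w v \<and> wreach V E R d v w} \<le> wcol V E d)"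
proof -
  obtain R where "well_order_on V R"
    using well_order_on by blast
  then have witness: "linear_order_on V R \<and> (\<forall>v\<in>V. card {w. less_in R w v \<and> wreach V E R d v w} \<le> card V)"
    using assms by (auto simp: well_order_on_def intro!: card_mono dest: wreach_imp_mem)
  show ?thesis
    unfolding wcol_def by (rule LeastI_ex) (use witness in blast)
qed

lemma copw_le_and_wins:
  assumes "cops_win V E r (Suc k)"
  shows "copw V E r \<le> Suc k" "\<exists>j. copw V E r = Suc j \<and> cops_win V E r (Suc j)"
proof -
  show "copw V E r \<le> Suc k"
    unfolding copw_def by (rule Least_le) (simp add: assms)
  have "1 \<le> copw V E r \<and> cops_win V E r (copw V E r)"
    unfolding copw_def by (rule LeastI[of _ "Suc k"]) (simp add: assms)
  then show "\<exists>j. copw V E r = Suc j \<and> cops_win V E r (Suc j)"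
    by (metis Suc_le_D One_nat_def)
qed

theorem mainTheorem2:
  fixes V :: "'a set" and E :: "'a \<Rightarrow> 'a \<Rightarrow> bool" and r :: nat
  assumes "simple_graph V E"
  shows "adm V E r + 1 \<le> copw V E r \<and> copw V E r \<le> wcol V E (2 * r) + 1"
proof -
  have "finite V"
    using assms by (simp add: simple_graph_def)
  then obtain R where "linear_order_on V R"
    "\<forall>v\<in>V. card {w. less_in R w v \<and> wreach V E R (2 * r) v w} \<le> wcol V E (2 * r)"
    using wcol_order_exists by blast
  then have "cops_win V E r (Suc (wcol V E (2 * r)))"
    using cops_win_if_wcol_order[OF assms] by blast
  then obtain k where "copw V E r = Suc k" "cops_win V E r (Suc k)"
    and "copw V E r \<le> Suc (wcol V E (2 * r))"
    using copw_le_and_wins by blast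
  moreover have "adm V E r \<le> k"
    using adm_le_if_cops_win[OF \<open>finite V\<close>] \<open>cops_win V E r (Suc k)\<close> by blast
  ultimately show ?thesis
    by simp
qed

end
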